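(* Let $m\geqslant 2$ and let $\theta_1,\dots,\theta_m\in\mathbb{R}$. Assume that there exist indices $i,j$ with $1\leqslant i<j\leqslant m$ such that $1,\theta_i,\theta_j$ are linearly independent over $\mathbb{Q}$. Then for every $\varepsilon>0$ and every $\alpha\in\mathbb{R}$ there exist $\pmb{x}=(x_1,\dots,x_m)\in\mathbb{Z}^m\setminus\{\pmb{0}\}$ and $y\in\mathbb{Z}$ such that $$\|\theta_1x_1+\dots+\theta_mx_m-\alpha\|<\frac{\varepsilon}{|\pmb{x}|}.$$
   Context: For $w\in\mathbb{R}$, $\|w\|=\min_{a\in\mathbb{Z}}|w-a|$ denotes the distance to the nearest integer. For $\pmb{x}\in\mathbb{R}^m$, $|\pmb{x}|=\max_{1\leqslant k\leqslant m}|x_k|$ is the sup-norm. (The integer $y$ is the integer nearest to $\theta_1x_1+\dots+\theta_mx_m-\alpha$, so that $|\theta_1x_1+\dots+\theta_mx_m-y-\alpha|=\|\theta_1x_1+\dots+\theta_mx_m-\alpha\|$.) *)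

theory Defs
  imports Complex_Main
begin

definition dist_int :: "real \<Rightarrow> real" where
  "dist_int w = Inf ((\<lambda>a::int. \<bar>w - of_int a\<bar>) ` UNIV)"

definition supnorm :: "nat \<Rightarrow> (nat \<Rightarrow> int) \<Rightarrow> real" where
  "supnorm m x = Max ((\<lambda>k. real_of_int \<bar>x k\<bar>) ` {1..m})"

definition lin_indep_Q3 :: "real \<Rightarrow> real \<Rightarrow> real \<Rightarrow> bool" where
  "lin_indep_Q3 u v w \<longleftrightarrow>
     (\<forall>a\<in>\<rat>. \<forall>b\<in>\<rat>. \<forall>c\<in>\<rat>. a * u + b * v + c * w = 0 \<longrightarrow> a = 0 \<and> b = 0 \<and> c = 0)"

end

(*
  Only two coordinates are used: with u = \<theta> i, v = \<theta> j and 1, u, v independent over the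
  rationals, it suffices to find (a, b) \<noteq> 0 with max |a| |b| * dist_int (a u + b v - \<alpha>) < \<epsilon>.
  Dirichlet's pigeonhole argument gives, for every Q, a nonzero (a, b) of size at most Q with
  a u + b v within 1/Q^2 of an integer, and independence makes this error nonzero.  Use it at a
  large scale Q2, with error e2, and then at the scale Q1 ~ \<epsilon>/|e2|, with error |e1| < 1/Q1^2.
  Writing frac \<alpha> = k e2 + j e1 + r greedily, with |r| < |e1|, |k| <~ 1/|e2| and |j| <~ |e2|/|e1|,
  the vector k x2 + j x1 approximates \<alpha> with error |r| and has size <~ Q2/|e2| + Q1 |e2|/|e1|.
  Times |e1| this is <~ Q2 |e1|/|e2| + \<epsilon>/2 < Q2 |e2|/\<epsilon>^2 + \<epsilon>/2, and Q2 |e2| < 1/Q2 is small.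
*)

theory Submission
  imports Defs
begin

lemma dist_int_eq_round: "dist_int w = \<bar>w - of_int (round w)\<bar>"
  unfolding dist_int_def by (rule cInf_eq_minimum) (auto simp: round_diff_minimal)

lemma dist_int_le: "dist_int w \<le> \<bar>w - of_int z\<bar>"
  unfolding dist_int_eq_round by (rule round_diff_minimal)

lemma int_multiple_approx:
  fixes t e :: real
  assumes "e \<noteq> 0"
  obtains k :: int where "\<bar>t - of_int k * e\<bar> < \<bar>e\<bar>" "\<bar>of_int k\<bar> \<le> \<bar>t\<bar> / \<bar>e\<bar> + 1"
proof
  define k where "k = \<lfloor>t / e\<rfloor>"
  have frac: "0 \<le> t / e - k" "t / e - k < 1"
    unfolding k_def by linarith+
  have "t - of_int k * e = e * (t / e - k)"
    using assms by (simp add: field_simps)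
  then have "\<bar>t - of_int k * e\<bar> = \<bar>e\<bar> * (t / e - k)"
    using frac by (simp add: abs_mult)
  also have "\<dots> < \<bar>e\<bar>"
    using assms frac by simp
  finally show "\<bar>t - of_int k * e\<bar> < \<bar>e\<bar>" .
  show "\<bar>of_int k\<bar> \<le> \<bar>t\<bar> / \<bar>e\<bar> + 1"
    using frac by (simp flip: abs_divide)
qed

lemma pigeonhole_unit_interval:
  fixes f :: "'a \<Rightarrow> real" and N :: nat
  assumes "N > 0" "finite S" "card S > N" and f: "\<And>p. p \<in> S \<Longrightarrow> 0 \<le> f p \<and> f p < 1"
  obtains p p' where "p \<in> S" "p' \<in> S" "p \<noteq> p'" "\<bar>f p - f p'\<bar> < 1 / N"
proof -
  define box where "box p = nat \<lfloor>N * f p\<rfloor>" for p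
  have "box ` S \<subseteq> {..<N}"
  proof
    fix z assume "z \<in> box ` S"
    then obtain p where "p \<in> S" "z = box p" by blast
    with f[of p] \<open>N > 0\<close> show "z \<in> {..<N}"
      by (auto simp: box_def floor_less_iff nat_less_iff)
  qed
  then have "card (box ` S) \<le> N"
    by (metis card_lessThan card_mono finite_lessThan)
  then have "\<not> inj_on box S"
    using assms(3) by (metis card_image leD)
  then obtain p p' where pp': "p \<in> S" "p' \<in> S" "p \<noteq> p'" "box p = box p'"
    unfolding inj_on_def by blast
  moreover have "0 \<le> N * f p" "0 \<le> N * f p'"
    using f pp'(1,2) by simp_all
  ultimately have "\<lfloor>N * f p\<rfloor> = \<lfloor>N * f p'\<rfloor>"
    by (simp add: box_def eq_nat_nat_iff)
  then have "\<bar>N * f p - N * f p'\<bar> < 1"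
    by linarith
  then have "N * \<bar>f p - f p'\<bar> < 1"
    by (simp add: abs_mult flip: right_diff_distrib)
  with pp' \<open>N > 0\<close> show ?thesis
    by (intro that[of p p']) (auto simp: field_simps)
qed

lemma dirichlet_linear_form_2:
  fixes u v :: real and Q :: nat
  assumes "Q > 0"
  obtains a b c :: int where "a \<noteq> 0 \<or> b \<noteq> 0" "\<bar>a\<bar> \<le> int Q" "\<bar>b\<bar> \<le> int Q"
    "\<bar>of_int a * u + of_int b * v - of_int c\<bar> < 1 / (real Q)\<^sup>2"
proof -
  define L where "L p = of_int (fst p) * u + of_int (snd p) * v" for p :: "int \<times> int"
  define S where "S = {0..int Q} \<times> {0..int Q}"
  have "card S = (Q + 1)\<^sup>2"
    by (simp add: S_def card_cartesian_product power2_eq_square nat_add_distrib)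
  then have "card S > Q\<^sup>2"
    by (simp add: power_strict_mono)
  obtain p p' where pp': "p \<in> S" "p' \<in> S" "p \<noteq> p'"
      "\<bar>frac (L p) - frac (L p')\<bar> < 1 / real (Q\<^sup>2)"
    by (rule pigeonhole_unit_interval[of "Q\<^sup>2" S "\<lambda>p. frac (L p)"])
      (use \<open>Q > 0\<close> \<open>card S > Q\<^sup>2\<close> in \<open>auto simp: S_def frac_lt_1\<close>)
  have "frac (L p) - frac (L p') = of_int (fst p - fst p') * u + of_int (snd p - snd p') * v
      - of_int (\<lfloor>L p\<rfloor> - \<lfloor>L p'\<rfloor>)"
    by (simp add: L_def frac_def algebra_simps)
  with pp' show ?thesis
    by (intro that[of "fst p - fst p'" "snd p - snd p'" "\<lfloor>L p\<rfloor> - \<lfloor>L p'\<rfloor>"])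
      (auto simp: S_def prod_eq_iff)
qed

lemma lin_indep_Q3_int_comb_nonzero:
  assumes "lin_indep_Q3 1 u v" and "a \<noteq> 0 \<or> b \<noteq> 0"
  shows "of_int a * u + of_int b * v - of_int c \<noteq> (0::real)"
proof
  assume "of_int a * u + of_int b * v - of_int c = (0::real)"
  then have "(- of_int c) * 1 + of_int a * u + of_int b * v = (0::real)"
    by simp
  with assms(1) have "of_int a = (0::real) \<and> of_int b = (0::real)"
    unfolding lin_indep_Q3_def by (metis Rats_of_int Rats_minus_iff)
  with assms(2) show False
    by simp
qed

lemma two_scale_expansion:
  fixes t e1 e2 :: real
  assumes "e1 \<noteq> 0" "e2 \<noteq> 0" "\<bar>t\<bar> \<le> 1"
  obtains k j :: int where "\<bar>t - of_int k * e2 - of_int j * e1\<bar> < \<bar>e1\<bar>"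
    "\<bar>of_int k\<bar> \<le> 1 / \<bar>e2\<bar> + 1" "\<bar>of_int j\<bar> \<le> \<bar>e2\<bar> / \<bar>e1\<bar> + 1"
proof -
  obtain k :: int where k: "\<bar>t - of_int k * e2\<bar> < \<bar>e2\<bar>" "\<bar>of_int k\<bar> \<le> \<bar>t\<bar> / \<bar>e2\<bar> + 1"
    using int_multiple_approx[OF assms(2)] .
  obtain j :: int where j: "\<bar>t - of_int k * e2 - of_int j * e1\<bar> < \<bar>e1\<bar>"
      "\<bar>of_int j\<bar> \<le> \<bar>t - of_int k * e2\<bar> / \<bar>e1\<bar> + 1"
    using int_multiple_approx[OF assms(1)] .
  have "\<bar>t\<bar> / \<bar>e2\<bar> \<le> 1 / \<bar>e2\<bar>"
    using assms(3) by (simp add: divide_right_mono)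
  moreover have "\<bar>t - of_int k * e2\<bar> / \<bar>e1\<bar> \<le> \<bar>e2\<bar> / \<bar>e1\<bar>"
    using k(1) by (simp add: divide_right_mono)
  ultimately show ?thesis
    using k j by (intro that[of k j]) linarith+
qed

lemma max_abs_int_comb_le:
  fixes k j a1 b1 a2 b2 :: int and Q1 Q2 :: real
  assumes "\<bar>of_int a2\<bar> \<le> Q2" "\<bar>of_int b2\<bar> \<le> Q2" "\<bar>of_int a1\<bar> \<le> Q1" "\<bar>of_int b1\<bar> \<le> Q1"
  shows "max \<bar>real_of_int (k * a2 + j * a1)\<bar> \<bar>real_of_int (k * b2 + j * b1)\<bar>
    \<le> \<bar>of_int k\<bar> * Q2 + \<bar>of_int j\<bar> * Q1"
proof -
  have "\<bar>real_of_int (k * c2 + j * c1)\<bar> \<le> \<bar>of_int k\<bar> * Q2 + \<bar>of_int j\<bar> * Q1"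
    if "\<bar>of_int c2\<bar> \<le> Q2" "\<bar>of_int c1\<bar> \<le> Q1" for c1 c2 :: int
  proof -
    have "\<bar>real_of_int (k * c2 + j * c1)\<bar> \<le> \<bar>of_int k\<bar> * \<bar>of_int c2\<bar> + \<bar>of_int j\<bar> * \<bar>of_int c1\<bar>"
      by (metis abs_mult abs_triangle_ineq of_int_add of_int_mult)
    also have "\<dots> \<le> \<bar>of_int k\<bar> * Q2 + \<bar>of_int j\<bar> * Q1"
      using that by (intro add_mono mult_left_mono) auto
    finally show ?thesis .
  qed
  with assms show ?thesis
    by simp
qed

lemma two_scale_combination:
  fixes u v \<alpha> :: real and Q1 Q2 :: nat and a1 b1 c1 a2 b2 c2 :: int
  assumes e1: "e1 = of_int a1 * u + of_int b1 * v - of_int c1" "e1 \<noteq> 0"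
      and e2: "e2 = of_int a2 * u + of_int b2 * v - of_int c2" "e2 \<noteq> 0"
      and x1: "a1 \<noteq> 0 \<or> b1 \<noteq> 0" "\<bar>a1\<bar> \<le> int Q1" "\<bar>b1\<bar> \<le> int Q1"
      and x2: "\<bar>a2\<bar> \<le> int Q2" "\<bar>b2\<bar> \<le> int Q2"
  obtains a b :: int where "a \<noteq> 0 \<or> b \<noteq> 0"
    "max \<bar>real_of_int a\<bar> \<bar>real_of_int b\<bar> * dist_int (of_int a * u + of_int b * v - \<alpha>)
       < ((1 / \<bar>e2\<bar> + 1) * Q2 + (\<bar>e2\<bar> / \<bar>e1\<bar> + 2) * Q1) * \<bar>e1\<bar>"
proof -
  obtain k j :: int where kj: "\<bar>frac \<alpha> - of_int k * e2 - of_int j * e1\<bar> < \<bar>e1\<bar>"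
      "\<bar>of_int k\<bar> \<le> 1 / \<bar>e2\<bar> + 1" "\<bar>of_int j\<bar> \<le> \<bar>e2\<bar> / \<bar>e1\<bar> + 1"
    using two_scale_expansion[OF e1(2) e2(2), of "frac \<alpha>"]
      frac_ge_0[of \<alpha>] frac_lt_1[of \<alpha>] by auto
  have x1_real: "\<bar>real_of_int a1\<bar> \<le> Q1" "\<bar>real_of_int b1\<bar> \<le> Q1"
    and x2_real: "\<bar>real_of_int a2\<bar> \<le> Q2" "\<bar>real_of_int b2\<bar> \<le> Q2"
    using x1(2,3) x2 by (metis of_int_abs of_int_le_iff of_int_of_nat_eq)+
  define a where "a = k * a2 + j * a1"
  define b where "b = k * b2 + j * b1"
  define z where "z = k * c2 + j * c1 - \<lfloor>\<alpha>\<rfloor>"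
  have remainder: "of_int a * u + of_int b * v - \<alpha> - of_int z
      = - (frac \<alpha> - of_int k * e2 - of_int j * e1)"
    by (simp add: a_def b_def z_def e1(1) e2(1) frac_def algebra_simps)
  show ?thesis
  proof (cases "a \<noteq> 0 \<or> b \<noteq> 0")
    case True
    have norm: "max \<bar>real_of_int a\<bar> \<bar>real_of_int b\<bar> \<le> \<bar>real_of_int k\<bar> * real Q2 + \<bar>real_of_int j\<bar> * real Q1"
      unfolding a_def b_def using x2_real x1_real by (rule max_abs_int_comb_le)
    have "dist_int (of_int a * u + of_int b * v - \<alpha>) < \<bar>e1\<bar>"
      using dist_int_le[of _ z] remainder kj(1) by (metis abs_minus_cancel order.strict_trans1)
    moreover have "0 < max \<bar>real_of_int a\<bar> \<bar>real_of_int b\<bar>"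
      using True by auto
    ultimately have "max \<bar>real_of_int a\<bar> \<bar>real_of_int b\<bar> * dist_int (of_int a * u + of_int b * v - \<alpha>)
        < max \<bar>real_of_int a\<bar> \<bar>real_of_int b\<bar> * \<bar>e1\<bar>"
      by simp
    also have "\<dots> \<le> (\<bar>real_of_int k\<bar> * real Q2 + \<bar>real_of_int j\<bar> * real Q1) * \<bar>e1\<bar>"
      using norm by (rule mult_right_mono) simp
    also have "\<dots> \<le> ((1 / \<bar>e2\<bar> + 1) * Q2 + (\<bar>e2\<bar> / \<bar>e1\<bar> + 2) * Q1) * \<bar>e1\<bar>"
    proof -
      have "\<bar>real_of_int k\<bar> * real Q2 \<le> (1 / \<bar>e2\<bar> + 1) * real Q2"
        using kj(2) by (rule mult_right_mono) simp
      moreover have "\<bar>real_of_int j\<bar> * real Q1 \<le> (\<bar>e2\<bar> / \<bar>e1\<bar> + 2) * real Q1"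
        using kj(3) by (intro mult_right_mono) auto
      ultimately show ?thesis
        by (intro mult_right_mono) auto
    qed
    finally show ?thesis
      using True that by blast
  next
    case False
    \<comment> \<open>then \<alpha> is within |e1| of an integer, and x1 alone does the job\<close>
    then have "\<bar>\<alpha> + of_int z\<bar> < \<bar>e1\<bar>"
      using remainder kj(1) by simp
    moreover have "of_int a1 * u + of_int b1 * v - \<alpha> - of_int (c1 + z) = e1 - (\<alpha> + of_int z)"
      by (simp add: e1(1))
    ultimately have dist: "dist_int (of_int a1 * u + of_int b1 * v - \<alpha>) < 2 * \<bar>e1\<bar>"
      using dist_int_le[of "of_int a1 * u + of_int b1 * v - \<alpha>" "c1 + z"]
        abs_triangle_ineq4[of e1 "\<alpha> + of_int z"] by linarith
    have "max \<bar>real_of_int a1\<bar> \<bar>real_of_int b1\<bar> \<le> Q1"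
      using x1_real by simp
    then have "max \<bar>real_of_int a1\<bar> \<bar>real_of_int b1\<bar> * dist_int (of_int a1 * u + of_int b1 * v - \<alpha>)
        \<le> Q1 * dist_int (of_int a1 * u + of_int b1 * v - \<alpha>)"
      by (rule mult_right_mono) (simp add: dist_int_eq_round)
    also have "\<dots> < Q1 * (2 * \<bar>e1\<bar>)"
      using dist x1 by (intro mult_strict_left_mono) auto
    also have "\<dots> \<le> ((1 / \<bar>e2\<bar> + 1) * Q2 + (\<bar>e2\<bar> / \<bar>e1\<bar> + 2) * Q1) * \<bar>e1\<bar>"
      by (simp add: algebra_simps)
    finally show ?thesis
      using x1(1) that by blast
  qed
qed

lemma two_scale_numeric_bound:
  fixes \<eta> d s Q1 Q2 :: real
  assumes "0 < d" "0 < s" "1 \<le> Q2" "0 < \<eta>" "\<eta> * Q2\<^sup>2 < 1"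
    and "s \<le> \<eta> * Q1" "\<eta> * Q1 < s + \<eta>" "d * Q1\<^sup>2 < 1"
  shows "((1 / \<eta> + 1) * Q2 + (\<eta> / d + 2) * Q1) * d < s + (2 / s\<^sup>2 + 1 + 2 / s) / Q2"
proof -
  have "0 < \<eta> * Q1"
    using assms(2,6) by linarith
  then have "0 < Q1"
    using assms(4) by (simp add: zero_less_mult_iff)
  have "\<eta> * Q2 \<le> \<eta> * Q2\<^sup>2"
    using assms(3,4) by (simp add: power2_eq_square)
  then have \<eta>_Q2: "\<eta> < 1 / Q2"
    using assms(3,5) by (simp add: pos_less_divide_eq)
  then have "\<eta> \<le> 1"
    using assms(3) by (simp add: divide_le_eq_1 less_imp_le order.strict_trans2)
  have "(s / \<eta>)\<^sup>2 \<le> Q1\<^sup>2"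
    using assms(2,4,6) by (intro power_mono) (simp_all add: pos_divide_le_eq mult.commute)
  then have "d * (s / \<eta>)\<^sup>2 < 1"
    using mult_left_mono[of "(s / \<eta>)\<^sup>2" "Q1\<^sup>2" d] assms(1,8) by linarith
  then have d_small: "d < (\<eta> / s)\<^sup>2"
    using assms(2,4) by (simp add: power_divide field_simps)
  have "(1 / \<eta> + 1) * Q2 * d \<le> 2 / \<eta> * Q2 * d"
    using \<open>\<eta> \<le> 1\<close> assms(1,3,4) by (intro mult_right_mono) (simp_all add: field_simps)
  also have "\<dots> < 2 / \<eta> * Q2 * (\<eta> / s)\<^sup>2"
    using d_small assms(3,4) by (intro mult_strict_left_mono) simp_all
  also have "\<dots> = 2 * (\<eta> * Q2\<^sup>2) / (s\<^sup>2 * Q2)"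
    using assms(2,3,4) by (simp add: field_simps power2_eq_square)
  also have "\<dots> < 2 / (s\<^sup>2 * Q2)"
    using assms(2,3,5) by (intro divide_strict_right_mono) simp_all
  finally have coarse: "(1 / \<eta> + 1) * Q2 * d < 2 / (s\<^sup>2 * Q2)" .
  have "Q1 * d < 1 / Q1"
    using assms(8) \<open>0 < Q1\<close> by (simp add: field_simps power2_eq_square)
  also have "\<dots> \<le> \<eta> / s"
    using assms(2,6) \<open>0 < Q1\<close> by (simp add: field_simps)
  also have "\<dots> < 1 / (s * Q2)"
    using \<eta>_Q2 assms(2) by (simp add: field_simps)
  finally have fine: "2 * Q1 * d < 2 / (s * Q2)"
    by simp
  have "((1 / \<eta> + 1) * Q2 + (\<eta> / d + 2) * Q1) * d = (1 / \<eta> + 1) * Q2 * d + \<eta> * Q1 + 2 * Q1 * d"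
    using assms(1) by (simp add: field_simps)
  moreover have "s + (2 / s\<^sup>2 + 1 + 2 / s) / Q2 = s + 2 / (s\<^sup>2 * Q2) + 1 / Q2 + 2 / (s * Q2)"
    by (simp add: add_divide_distrib)
  ultimately show ?thesis
    using coarse fine assms(7) \<eta>_Q2 by linarith
qed

lemma inhomogeneous_approx_2:
  fixes u v \<alpha> \<epsilon> :: real
  assumes li: "lin_indep_Q3 1 u v" and "\<epsilon> > 0"
  obtains a b :: int where "a \<noteq> 0 \<or> b \<noteq> 0"
    "max \<bar>real_of_int a\<bar> \<bar>real_of_int b\<bar> * dist_int (of_int a * u + of_int b * v - \<alpha>) < \<epsilon>"
proof -
  define s where "s = \<epsilon> / 2"
  define C where "C = 2 / s\<^sup>2 + 1 + 2 / s"
  have "0 < s"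
    using \<open>\<epsilon> > 0\<close> by (simp add: s_def)
  then have "0 < C"
    unfolding C_def by (intro add_pos_pos) auto
  obtain Q2 :: nat where "C / s < Q2"
    using reals_Archimedean2 by blast
  then have "C < s * Q2"
    using \<open>0 < s\<close> by (simp add: pos_divide_less_eq mult.commute)
  moreover from this have "0 < Q2"
    using \<open>0 < C\<close> by (cases "Q2 = 0") auto
  ultimately have Q2: "1 \<le> real Q2" "C / Q2 < s"
    by (simp_all add: pos_divide_less_eq)
  obtain a2 b2 c2 :: int where x2: "a2 \<noteq> 0 \<or> b2 \<noteq> 0" "\<bar>a2\<bar> \<le> int Q2" "\<bar>b2\<bar> \<le> int Q2"
      and e2_small: "\<bar>of_int a2 * u + of_int b2 * v - of_int c2\<bar> < 1 / (real Q2)\<^sup>2"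
    using dirichlet_linear_form_2[of Q2 u v] Q2(1) by auto
  define e2 where "e2 = of_int a2 * u + of_int b2 * v - of_int c2"
  have "e2 \<noteq> 0"
    unfolding e2_def using li x2(1) by (rule lin_indep_Q3_int_comb_nonzero)
  define Q1 :: nat where "Q1 = nat \<lceil>s / \<bar>e2\<bar>\<rceil>"
  have "real Q1 = of_int \<lceil>s / \<bar>e2\<bar>\<rceil>"
    using \<open>0 < s\<close> by (simp add: Q1_def)
  then have "s / \<bar>e2\<bar> \<le> Q1" "Q1 < s / \<bar>e2\<bar> + 1"
    by linarith+
  then have Q1: "s \<le> \<bar>e2\<bar> * Q1" "\<bar>e2\<bar> * Q1 < s + \<bar>e2\<bar>"
    using \<open>e2 \<noteq> 0\<close> by (simp_all add: field_simps)
  then have "Q1 > 0"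
    using \<open>0 < s\<close> by (intro gr0I) simp
  obtain a1 b1 c1 :: int where x1: "a1 \<noteq> 0 \<or> b1 \<noteq> 0" "\<bar>a1\<bar> \<le> int Q1" "\<bar>b1\<bar> \<le> int Q1"
      and e1_small: "\<bar>of_int a1 * u + of_int b1 * v - of_int c1\<bar> < 1 / (real Q1)\<^sup>2"
    using dirichlet_linear_form_2[OF \<open>Q1 > 0\<close>, of u v] by auto
  define e1 where "e1 = of_int a1 * u + of_int b1 * v - of_int c1"
  have "e1 \<noteq> 0"
    unfolding e1_def using li x1(1) by (rule lin_indep_Q3_int_comb_nonzero)
  obtain a b :: int where "a \<noteq> 0 \<or> b \<noteq> 0" and
    "max \<bar>real_of_int a\<bar> \<bar>real_of_int b\<bar> * dist_int (of_int a * u + of_int b * v - \<alpha>)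
       < ((1 / \<bar>e2\<bar> + 1) * Q2 + (\<bar>e2\<bar> / \<bar>e1\<bar> + 2) * Q1) * \<bar>e1\<bar>"
    using two_scale_combination[OF e1_def \<open>e1 \<noteq> 0\<close> e2_def \<open>e2 \<noteq> 0\<close> x1 x2(2,3)] by blast
  moreover have "((1 / \<bar>e2\<bar> + 1) * Q2 + (\<bar>e2\<bar> / \<bar>e1\<bar> + 2) * Q1) * \<bar>e1\<bar> < s + C / Q2"
    unfolding C_def
  proof (rule two_scale_numeric_bound)
    show "\<bar>e2\<bar> * (real Q2)\<^sup>2 < 1"
      using e2_small Q2(1) by (simp add: e2_def field_simps)
    show "\<bar>e1\<bar> * (real Q1)\<^sup>2 < 1"
      using e1_small \<open>Q1 > 0\<close> by (simp add: e1_def field_simps)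
  qed (use \<open>e1 \<noteq> 0\<close> \<open>e2 \<noteq> 0\<close> \<open>0 < s\<close> Q2(1) Q1 in auto)
  moreover have "s + C / Q2 < \<epsilon>"
    using Q2(2) unfolding s_def by linarith
  ultimately show ?thesis
    using that by (meson order.strict_trans)
qed

lemma sum_two_point:
  fixes \<theta> :: "nat \<Rightarrow> real"
  assumes "finite A" "i \<in> A" "j \<in> A" "i \<noteq> j"
  shows "(\<Sum>k\<in>A. \<theta> k * of_int (if k = i then a else if k = j then b else 0))
    = of_int a * \<theta> i + of_int b * \<theta> j"
proof -
  have "\<theta> k * of_int (if k = i then a else if k = j then b else 0)
      = (if k = i then \<theta> i * of_int a else 0) + (if k = j then \<theta> j * of_int b else 0)" for k
    using assms(4) by auto
  then show ?thesis
    using assms by (simp add: sum.distrib)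
qed

lemma supnorm_two_point:
  assumes "i \<in> {1..m}" "j \<in> {1..m}" "i \<noteq> j"
  shows "supnorm m (\<lambda>k. if k = i then a else if k = j then b else 0)
    = max \<bar>real_of_int a\<bar> \<bar>real_of_int b\<bar>"
  unfolding supnorm_def
proof (rule Max_eqI)
  have "max \<bar>real_of_int a\<bar> \<bar>real_of_int b\<bar> \<in> {real_of_int \<bar>a\<bar>, real_of_int \<bar>b\<bar>}"
    by (simp add: max_def)
  then show "max \<bar>real_of_int a\<bar> \<bar>real_of_int b\<bar>
      \<in> (\<lambda>k. real_of_int \<bar>if k = i then a else if k = j then b else 0\<bar>) ` {1..m}"
    using assms by (auto intro: image_eqI[of _ _ i] image_eqI[of _ _ j])
qed (use assms in auto)

lemma inhomogeneous_approx_vector: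
  fixes \<theta> :: "nat \<Rightarrow> real"
  assumes "1 \<le> i" "i < j" "j \<le> m" and li: "lin_indep_Q3 1 (\<theta> i) (\<theta> j)" and "\<epsilon> > 0"
  obtains x :: "nat \<Rightarrow> int" where "\<forall>k. k \<notin> {1..m} \<longrightarrow> x k = 0" "\<exists>k\<in>{1..m}. x k \<noteq> 0"
    "0 < supnorm m x" "supnorm m x * dist_int ((\<Sum>k=1..m. \<theta> k * of_int (x k)) - \<alpha>) < \<epsilon>"
proof -
  have ij: "i \<in> {1..m}" "j \<in> {1..m}" "i \<noteq> j"
    using assms(1-3) by auto
  obtain a b :: int where ab: "a \<noteq> 0 \<or> b \<noteq> 0" and small:
    "max \<bar>real_of_int a\<bar> \<bar>real_of_int b\<bar> * dist_int (of_int a * \<theta> i + of_int b * \<theta> j - \<alpha>) < \<epsilon>"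
    using inhomogeneous_approx_2[OF li \<open>\<epsilon> > 0\<close>, of \<alpha>] by blast
  define x where "x = (\<lambda>k. if k = i then a else if k = j then b else 0)"
  have sum: "(\<Sum>k=1..m. \<theta> k * of_int (x k)) = of_int a * \<theta> i + of_int b * \<theta> j"
    unfolding x_def using ij by (intro sum_two_point) auto
  have norm: "supnorm m x = max \<bar>real_of_int a\<bar> \<bar>real_of_int b\<bar>"
    unfolding x_def using ij by (rule supnorm_two_point)
  have "x i \<noteq> 0 \<or> x j \<noteq> 0"
    using ij(3) ab by (simp add: x_def)
  then have "\<exists>k\<in>{1..m}. x k \<noteq> 0"
    using ij by blast
  moreover have "\<forall>k. k \<notin> {1..m} \<longrightarrow> x k = 0"
    using ij by (simp add: x_def)
  moreover have "0 < supnorm m x"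
    using ab norm by auto
  ultimately show ?thesis
    using small by (intro that[of x]) (simp_all only: sum norm)
qed

theorem mainTheorem1:
  fixes m :: nat and \<theta> :: "nat \<Rightarrow> real"
  assumes "m \<ge> 2"
    and "\<exists>i j. 1 \<le> i \<and> i < j \<and> j \<le> m \<and> lin_indep_Q3 1 (\<theta> i) (\<theta> j)"
  shows "\<forall>\<epsilon>>0. \<forall>\<alpha>::real. \<exists>x :: nat \<Rightarrow> int. \<exists>y :: int.
           (\<forall>k. k \<notin> {1..m} \<longrightarrow> x k = 0) \<and> (\<exists>k\<in>{1..m}. x k \<noteq> 0) \<and>
           \<bar>(\<Sum>k=1..m. \<theta> k * of_int (x k)) - of_int y - \<alpha>\<bar>
              = dist_int ((\<Sum>k=1..m. \<theta> k * of_int (x k)) - \<alpha>) \<and>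
           dist_int ((\<Sum>k=1..m. \<theta> k * of_int (x k)) - \<alpha>) < \<epsilon> / supnorm m x"
proof (intro allI impI)
  fix \<epsilon> \<alpha> :: real
  assume "\<epsilon> > 0"
  obtain i j where "1 \<le> i" "i < j" "j \<le> m" "lin_indep_Q3 1 (\<theta> i) (\<theta> j)"
    using assms(2) by blast
  then obtain x :: "nat \<Rightarrow> int" where x: "\<forall>k. k \<notin> {1..m} \<longrightarrow> x k = 0" "\<exists>k\<in>{1..m}. x k \<noteq> 0"
    and "0 < supnorm m x" "supnorm m x * dist_int ((\<Sum>k=1..m. \<theta> k * of_int (x k)) - \<alpha>) < \<epsilon>"
    using \<open>\<epsilon> > 0\<close> by (rule inhomogeneous_approx_vector)
  then have "dist_int ((\<Sum>k=1..m. \<theta> k * of_int (x k)) - \<alpha>) < \<epsilon> / supnorm m x"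
    by (simp add: pos_less_divide_eq mult.commute)
  moreover have "\<bar>(\<Sum>k=1..m. \<theta> k * of_int (x k)) - of_int (round ((\<Sum>k=1..m. \<theta> k * of_int (x k)) - \<alpha>)) - \<alpha>\<bar>
      = dist_int ((\<Sum>k=1..m. \<theta> k * of_int (x k)) - \<alpha>)"
    by (simp add: dist_int_eq_round algebra_simps)
  ultimately show "\<exists>x :: nat \<Rightarrow> int. \<exists>y :: int.
           (\<forall>k. k \<notin> {1..m} \<longrightarrow> x k = 0) \<and> (\<exists>k\<in>{1..m}. x k \<noteq> 0) \<and>
           \<bar>(\<Sum>k=1..m. \<theta> k * of_int (x k)) - of_int y - \<alpha>\<bar>
              = dist_int ((\<Sum>k=1..m. \<theta> k * of_int (x k)) - \<alpha>) \<and>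
           dist_int ((\<Sum>k=1..m. \<theta> k * of_int (x k)) - \<alpha>) < \<epsilon> / supnorm m x"
    using x by blast
qed

end
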